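(* Let $R_n\in\mathbb{Z}[x,y,z]$ be the Markov–Pell polynomials. Then for all $k\ge2$, $$R_{2k+1}=(x^2+y^2)(x^2+y^2+z^2)\,R_{2k-1}-x^2y^2z^4\,R_{2k-3},$$ and for all $k\ge0$, $R_{2k+1}(x,y,z)=P_{k/(k+1)}(x^2,y^2,z^2)$ (with $P_{0/1}:=1$).
   Context: Markov polynomials. Let $x,y,z$ be indeterminates. Consider the set consisting of all rationals $\rho\in[0,1]$, each written in lowest terms $\rho=a/b$ with integers $a\ge 0$, $b\ge 1$, together with the formal symbol $1/0$. Define Laurent polynomials $M_\rho(x,y,z)$ recursively by $M_{1/0}=y$, $M_{0/1}=x$, $M_{1/1}=\frac{x^2+y^2}{z}$, and: whenever $a/b$, $c/d$ are in this set with $|ad-bc|=1$ and $(a+2c)/(b+2d)\in[0,1]$, then $M_{\frac{a+2c}{b+2d}}=\big(M_{c/d}^2+M_{\frac{a+c}{b+d}}^2\big)/M_{a/b}$. This determines $M_\rho$ for every rational $\rho\in[0,1]$. Numerator. For coprime $1\le a\le b$, $P_{a/b}(u,v,w)$ denotes the homogeneous polynomial of degree $a+b-1$ such that $M_{a/b}(x,y,z)=P_{a/b}(x^2,y^2,z^2)/(x^{a-1}y^{b-1}z^{a+b-1})$; its existence is known. Markov–Pell polynomials: $R_0=0$, $R_1=1$, and for $k\ge1$: $R_{2k}=(x^2+y^2)R_{2k-1}+y^2z^2R_{2k-2}$, $R_{2k+1}=(x^2+y^2)R_{2k}+x^2z^2R_{2k-1}$. *)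

theory Defs
  imports Complex_Main
begin

fun MP :: "'a::comm_ring_1 \<Rightarrow> 'a \<Rightarrow> 'a \<Rightarrow> nat \<Rightarrow> 'a" where
  "MP x y z 0 = 0"
| "MP x y z (Suc 0) = 1"
| "MP x y z (Suc (Suc n)) =
     (if even n then (x^2 + y^2) * MP x y z (Suc n) + y^2 * z^2 * MP x y z n
      else (x^2 + y^2) * MP x y z (Suc n) + x^2 * z^2 * MP x y z n)"

text \<open>A fraction a/b (lowest terms,
  or the formal symbol 1/0) is represented by the pair (a,b). Markov_rel x y z (a,b) v
  means: the recursion of the paper derives the value v for M_{a/b}(x,y,z).\<close>
inductive Markov_rel :: "real \<Rightarrow> real \<Rightarrow> real \<Rightarrow> nat \<times> nat \<Rightarrow> real \<Rightarrow> bool"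
  for x y z :: real where
  inf: "Markov_rel x y z (1, 0) y"
| zero: "Markov_rel x y z (0, 1) x"
| one: "Markov_rel x y z (1, 1) ((x^2 + y^2) / z)"
| step: "\<lbrakk> Markov_rel x y z (a, b) A; Markov_rel x y z (c, d) C;
           Markov_rel x y z (a + c, b + d) B;
           \<bar>int a * int d - int b * int c\<bar> = 1;
           a + 2 * c \<le> b + 2 * d \<rbrakk>
         \<Longrightarrow> Markov_rel x y z (a + 2 * c, b + 2 * d) ((C^2 + B^2) / A)"

definition Markov_M :: "real \<Rightarrow> real \<Rightarrow> real \<Rightarrow> nat \<Rightarrow> nat \<Rightarrow> real" where
  "Markov_M x y z a b = (THE v. Markov_rel x y z (a, b) v)"

end

theory Submission
  imports Defs
begin

text \<open>Eliminating the even-indexed terms, the odd Markov-Pell polynomials T k = R (2k+1)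
  satisfy a three-term linear recurrence, hence the Cassini identity
  T (k+2) T k - T (k+1)^2 = (x^2 y^2 z^4)^k (x^2 + y^2)^2 y^2 z^2.
  After rescaling, N k = T k x / (x y z^2)^k, this is exactly the Markov exchange relation
  N (k+2) N k = M(1/1)^2 + N (k+1)^2, i.e. the defining recursion applied to the Farey
  neighbours k/(k+1) and 1/1; since N 0 = M(0/1) and N 1 = M(1/2), we get N k = M(k/(k+1)).
  The recursion determines each value uniquely because (a + 2c, b + 2d) determines the
  unimodular pair (a, b), (c, d).\<close>

lemma MP_even_step:
  "even n \<Longrightarrow> MP x y z (n+2) = (x^2 + y^2) * MP x y z (n+1) + y^2 * z^2 * MP x y z n"
  using MP.simps(3)[of x y z n] by simp

lemma MP_odd_step:
  "odd n \<Longrightarrow> MP x y z (n+2) = (x^2 + y^2) * MP x y z (n+1) + x^2 * z^2 * MP x y z n"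
  using MP.simps(3)[of x y z n] by simp

declare MP.simps(3) [simp del]

lemma MP_odd_recurrence:
  assumes "odd n"
  shows "MP x y z (n+4) = (x^2 + y^2) * (x^2 + y^2 + z^2) * MP x y z (n+2)
                          - x^2 * y^2 * z^4 * MP x y z n"
proof -
  have "odd (n+2)" "even (n+1)" using assms by simp_all
  then have four: "MP x y z (n+4) = (x^2 + y^2) * MP x y z (n+3) + x^2 * z^2 * MP x y z (n+2)"
    and three: "MP x y z (n+3) = (x^2 + y^2) * MP x y z (n+2) + y^2 * z^2 * MP x y z (n+1)"
    using MP_odd_step MP_even_step by (simp_all add: eval_nat_numeral)
  have two: "MP x y z (n+2) = (x^2 + y^2) * MP x y z (n+1) + x^2 * z^2 * MP x y z n"
    using MP_odd_step[OF assms] .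
  show ?thesis
    unfolding four three two by (simp add: algebra_simps power2_eq_square power4_eq_xxxx)
qed

lemma MP_3: "MP x y z 3 = (x^2 + y^2)^2 + x^2 * z^2"
  using MP_odd_step[of 1 x y z] MP_even_step[of 0 x y z] by (simp add: power2_eq_square numeral_3_eq_3)

lemma linear_recurrence_cassini:
  fixes T :: "nat \<Rightarrow> 'a::comm_ring_1"
  assumes rec: "\<And>n. T (Suc (Suc n)) = \<alpha> * T (Suc n) - \<beta> * T n"
  shows "T (Suc (Suc n)) * T n - T (Suc n)^2 = \<beta>^n * (T 2 * T 0 - T 1 ^ 2)"
proof (induction n)
  case 0
  then show ?case by (simp add: numeral_2_eq_2)
next
  case (Suc n)
  have "T (Suc (Suc (Suc n))) * T (Suc n) - T (Suc (Suc n))^2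
      = \<beta> * (T (Suc (Suc n)) * T n - T (Suc n)^2)"
    by (simp add: rec algebra_simps power2_eq_square)
  then show ?case using Suc by simp
qed

lemma MP_odd_cassini:
  "MP x y z (2*n+5) * MP x y z (2*n+1) - (MP x y z (2*n+3))^2
     = (x^2 * y^2 * z^4)^n * (x^2 + y^2)^2 * y^2 * z^2"
proof -
  let ?T = "\<lambda>n. MP x y z (2*n+1)"
  have rec: "?T (Suc (Suc n)) = (x^2 + y^2) * (x^2 + y^2 + z^2) * ?T (Suc n) - x^2 * y^2 * z^4 * ?T n" for n
    using MP_odd_recurrence[of "2*n+1" x y z, simplified] by (simp add: eval_nat_numeral)
  have T1: "?T 1 = (x^2 + y^2)^2 + x^2 * z^2"
    using MP_3 by simp
  have "?T (Suc (Suc n)) * ?T n - ?T (Suc n)^2 = (x^2 * y^2 * z^4)^n * (?T 2 * ?T 0 - ?T 1 ^ 2)"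
    by (rule linear_recurrence_cassini[of ?T, OF rec])
  also have "?T 2 * ?T 0 - ?T 1 ^ 2 = (x^2 + y^2)^2 * y^2 * z^2"
    using rec[of 0] T1 by (simp add: algebra_simps power2_eq_square power4_eq_xxxx eval_nat_numeral)
  finally show ?thesis by (simp add: ac_simps eval_nat_numeral)
qed

lemma MP_pos:
  fixes x y z :: real
  assumes "x \<noteq> 0 \<or> y \<noteq> 0" and "0 < n"
  shows "0 < MP x y z n"
  using assms(2)
proof (induction n rule: induct_nat_012)
  case (ge2 n)
  have "0 < x^2 + y^2" using assms(1) by (simp add: sum_power2_gt_zero_iff)
  moreover have "0 \<le> MP x y z n" using ge2.IH(1) by (cases "n = 0") auto
  ultimately show ?case
    using ge2.IH(2) by (auto simp: MP.simps(3) intro!: add_pos_nonneg)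
qed simp_all

lemma Farey_step_decomposition_unique:
  fixes a b c d a' b' c' d' :: nat
  assumes sum: "a + 2*c = a' + 2*c'" "b + 2*d = b' + 2*d'"
    and det: "\<bar>int a * int d - int b * int c\<bar> = 1" "\<bar>int a' * int d' - int b' * int c'\<bar> = 1"
  shows "a = a' \<and> b = b' \<and> c = c' \<and> d = d'"
proof -
  define p q where "p = int a + 2 * int c" and "q = int b + 2 * int d"
  define e e' where "e = int c * q - int d * p" and "e' = int c' * q - int d' * p"
  define \<Delta> where "\<Delta> = int c * int d' - int c' * int d"
  \<comment> \<open>|p \<Delta>| \<le> c + c' \<le> p and |q \<Delta>| \<le> d + d' \<le> q, so \<Delta> \<noteq> 0 would force a = b = 0\<close>
  have p': "p = int a' + 2 * int c'" and q': "q = int b' + 2 * int d'"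
    using sum unfolding p_def q_def by linarith+
  have "e = int b * int c - int a * int d"
    unfolding e_def p_def q_def by (simp add: algebra_simps)
  moreover have "e' = int b' * int c' - int a' * int d'"
    unfolding e'_def p' q' by (simp add: algebra_simps)
  ultimately have e: "e = 1 \<or> e = -1" and e': "e' = 1 \<or> e' = -1"
    using det by linarith+
  have p\<Delta>: "p * \<Delta> = e * int c' - e' * int c" and q\<Delta>: "q * \<Delta> = e * int d' - e' * int d"
    unfolding e_def e'_def \<Delta>_def by (simp_all add: algebra_simps)
  have "\<Delta> = 0"
  proof (rule ccontr)
    assume "\<Delta> \<noteq> 0"
    then have "1 \<le> \<bar>\<Delta>\<bar>" by linarith
    then have "p \<le> \<bar>p * \<Delta>\<bar>" "q \<le> \<bar>q * \<Delta>\<bar>"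
      using mult_left_mono[of 1 "\<bar>\<Delta>\<bar>"] unfolding p_def q_def abs_mult by simp_all
    then have "p \<le> int c + int c'" "q \<le> int d + int d'"
      using e e' unfolding p\<Delta> q\<Delta> by auto
    then have "a = 0" "b = 0" using p' q' unfolding p_def q_def by linarith+
    then show False using det(1) by simp
  qed
  then have "e * int c' = e' * int c" "e * int d' = e' * int d"
    using p\<Delta> q\<Delta> by simp_all
  then have "c = c' \<and> d = d'"
    using e e' det(1) by auto
  then show ?thesis using sum by simp
qed

lemma Farey_step_target_ge_3:
  assumes "\<bar>int a * int d - int b * int c\<bar> = 1"
  shows "3 \<le> (a + 2*c) + (b + 2*d)"
proof -
  have "a + b \<noteq> 0" "c + d \<noteq> 0" using assms by (intro notI, simp)+
  then show ?thesis by linarith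
qed

lemma Markov_rel_initial_values:
  assumes "Markov_rel x y z P v" and "fst P + snd P < 3"
  shows "(P = (1, 0) \<and> v = y) \<or> (P = (0, 1) \<and> v = x) \<or> (P = (1, 1) \<and> v = (x^2 + y^2) / z)"
  using assms by cases (auto dest: Farey_step_target_ge_3)

lemma Markov_rel_unique:
  assumes "Markov_rel x y z P v" and "Markov_rel x y z P w"
  shows "v = w"
  using assms
proof (induction arbitrary: w rule: Markov_rel.induct)
  case inf
  show ?case using Markov_rel_initial_values[OF inf.prems] by simp
next
  case zero
  show ?case using Markov_rel_initial_values[OF zero.prems] by simp
next
  case one
  show ?case using Markov_rel_initial_values[OF one.prems] by simp
next
  case (step a b A c d C B)
  have large: "3 \<le> (a + 2*c) + (b + 2*d)"
    using Farey_step_target_ge_3 step.hyps(4) .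
  from step.prems show ?case
  proof cases
    case (step a' b' A' c' d' C' B')
    then have "a = a' \<and> b = b' \<and> c = c' \<and> d = d'"
      using Farey_step_decomposition_unique[of a c a' c' b d b' d'] step.hyps(4) by simp
    then have "A = A'" "C = C'" "B = B'"
      using step.IH \<open>Markov_rel x y z (a', b') A'\<close> \<open>Markov_rel x y z (c', d') C'\<close>
        \<open>Markov_rel x y z (a' + c', b' + d') B'\<close> by simp_all
    then show ?thesis using \<open>w = (C'\<^sup>2 + B'\<^sup>2) / A'\<close> by simp
  qed (use large in simp_all)
qed

lemma Markov_M_eqI:
  assumes "Markov_rel x y z (a, b) v"
  shows "Markov_M x y z a b = v"
  unfolding Markov_M_def using assms by (blast intro: Markov_rel_unique)

lemma MP_odd_scaled_exchange:
  fixes x y z :: real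
  assumes "x \<noteq> 0" "y \<noteq> 0" "z \<noteq> 0"
    and N_eq: "\<And>k. N k = MP x y z (2*k+1) * x / (x*y*z^2)^k"
  shows "N (k+2) * N k = ((x^2 + y^2) / z)^2 + N (k+1)^2"
proof -
  define u where "u = x*y*z^2"
  have "u \<noteq> 0" using assms unfolding u_def by simp
  have "N (k+2) * N k - N (k+1)^2
      = (MP x y z (2*k+5) * MP x y z (2*k+1) - MP x y z (2*k+3)^2) * x^2 / u^(2*k+2)"
    using \<open>u \<noteq> 0\<close> unfolding N_eq u_def[symmetric]
    by (simp add: field_simps power_add power2_eq_square mult_2 eval_nat_numeral)
  also have "\<dots> = (u^2)^k * (x^2 + y^2)^2 * y^2 * z^2 * x^2 / u^(2*k+2)"
    unfolding MP_odd_cassini u_def by (simp add: power_mult_distrib power4_eq_xxxx power2_eq_square)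
  also have "\<dots> = (x^2 + y^2)^2 * y^2 * z^2 * x^2 / u^2"
    using \<open>u \<noteq> 0\<close> unfolding power_add power_mult by simp
  also have "\<dots> = ((x^2 + y^2) / z)^2"
    using assms unfolding u_def by (simp add: field_simps power2_eq_square power4_eq_xxxx)
  finally show ?thesis by (simp add: algebra_simps)
qed

lemma Markov_rel_MP_odd:
  fixes x y z :: real
  assumes nz: "x \<noteq> 0" "y \<noteq> 0" "z \<noteq> 0"
  shows "Markov_rel x y z (k, k+1) (MP x y z (2*k+1) * x / (x*y*z^2)^k)"
proof -
  define N where "N k = MP x y z (2*k+1) * x / (x*y*z^2)^k" for k
  have "Markov_rel x y z (k, k+1) (N k)"
  proof (induction k rule: induct_nat_012)
    case 0
    show ?case using Markov_rel.zero unfolding N_def by simp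
  next
    case 1
    have "Markov_rel x y z (1 + 2*0, 0 + 2*1) ((x^2 + ((x^2 + y^2) / z)^2) / y)"
      by (rule Markov_rel.step[OF Markov_rel.inf Markov_rel.zero]) (use Markov_rel.one in simp_all)
    moreover have "N 1 = (x^2 + ((x^2 + y^2) / z)^2) / y"
      using nz unfolding N_def by (simp add: MP_3[unfolded numeral_3_eq_3] field_simps power2_eq_square)
    ultimately show ?case by simp
  next
    case (ge2 k)
    have "N k \<noteq> 0"
      using MP_pos[of x y "2*k+1" z] nz unfolding N_def by simp
    then have "N (k+2) = (((x^2 + y^2) / z)^2 + N (k+1)^2) / N k"
      using MP_odd_scaled_exchange[OF nz N_def, of k] by (simp add: field_simps)
    moreover have "Markov_rel x y z (k + 2*1, (k+1) + 2*1) ((((x^2 + y^2) / z)^2 + N (k+1)^2) / N k)"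
      by (rule Markov_rel.step[OF ge2.IH(1) Markov_rel.one]) (use ge2.IH(2) in simp_all)
    ultimately show ?case by simp
  qed
  then show ?thesis unfolding N_def .
qed

theorem mainTheorem8:
  shows "(\<forall>(x::'a::comm_ring_1) y z k. k \<ge> 2 \<longrightarrow>
            MP x y z (2*k+1) = (x^2 + y^2) * (x^2 + y^2 + z^2) * MP x y z (2*k-1)
                               - x^2 * y^2 * z^4 * MP x y z (2*k-3))
       \<and> (\<forall>(x::real) y z k. x \<noteq> 0 \<longrightarrow> y \<noteq> 0 \<longrightarrow> z \<noteq> 0 \<longrightarrow>
            Markov_M x y z k (k+1) = MP x y z (2*k+1) / (x powi (int k - 1) * y^k * z^(2*k)))"
proof (intro conjI allI impI)
  fix x y z :: 'a and k :: nat
  assume "k \<ge> 2"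
  then have "odd (2*k-3)" "2*k-3+4 = 2*k+1" "2*k-3+2 = 2*k-1" by presburger+
  then show "MP x y z (2*k+1) = (x^2 + y^2) * (x^2 + y^2 + z^2) * MP x y z (2*k-1)
                               - x^2 * y^2 * z^4 * MP x y z (2*k-3)"
    using MP_odd_recurrence by metis
next
  fix x y z :: real and k :: nat
  assume nz: "x \<noteq> 0" "y \<noteq> 0" "z \<noteq> 0"
  have "x powi (int k - 1) * y^k * z^(2*k) = (x*y*z^2)^k / x"
    using nz by (simp add: power_int_diff power_mult_distrib power_mult)
  then show "Markov_M x y z k (k+1) = MP x y z (2*k+1) / (x powi (int k - 1) * y^k * z^(2*k))"
    using Markov_M_eqI[OF Markov_rel_MP_odd[OF nz]] nz by simp
qed

end
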